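(* For all integers $J\geq 0$ and $N\geq 0$: $\mathfrak{m}_{\mathrm{odd}}(0,8J+7;16N+r)\equiv 0\pmod 4$ for $r\in\{9,13\}$; $\mathfrak{m}_{\mathrm{odd}}(0,16J+15;16N+13)\equiv 0\pmod 8$; $\mathfrak{m}_{\mathrm{odd}}(0,64J+63;32N+29)\equiv 0\pmod{16}$; $\mathfrak{m}_{\mathrm{odd}}(0,128J+127;32N+29)\equiv 0\pmod{32}$.
   Context: For $a\in\{-2,-1,0,1,2\}$ and integer $t\geq0$, the integers $\mathfrak{m}_{\mathrm{odd}}(a,t;n)$ are defined by $\sum_{n\geq0}\mathfrak{m}_{\mathrm{odd}}(a,t;n)q^n=\sum\prod_{k=1}^t\frac{q^{n_k}}{1+aq^{n_k}+q^{2n_k}}$, the sum running over all $t$-tuples of odd positive integers $n_1<n_2<\cdots<n_t$ (for $t=0$ the series is $1$). *)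

theory Defs
  imports Main "HOL-Library.FuncSet"
begin

text \<open>Coefficients of 1/(1 + a x + x^2) = \<Sum>m. cheb a m * x^m.\<close>
fun cheb :: "int \<Rightarrow> nat \<Rightarrow> int" where
  "cheb a 0 = 1"
| "cheb a (Suc 0) = - a"
| "cheb a (Suc (Suc m)) = - a * cheb a (Suc m) - cheb a m"

text \<open>Coefficient of q^n in the sum over t-element sets S of odd positive integers of
  \<Prod>s\<in>S. q^s/(1 + a q^s + q^(2s)).  Expanding each factor as \<Sum>m. cheb a m * q^(s(m+1)),
  the coefficient is the sum over S and exponent choices f with \<Sum>s\<in>S. s(f s + 1) = n.
  Only sets S of odd numbers \<le> n can contribute.\<close>
definition m_odd :: "int \<Rightarrow> nat \<Rightarrow> nat \<Rightarrow> int" where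
  "m_odd a t n =
     (\<Sum>S \<in> {S. S \<subseteq> {k. odd k \<and> k \<le> n} \<and> card S = t}.
        \<Sum>f \<in> {f \<in> S \<rightarrow>\<^sub>E {..n}. (\<Sum>s\<in>S. s * (f s + 1)) = n}.
          \<Prod>s\<in>S. cheb a (f s))"

end

theory Submission
  imports Defs "HOL-Computational_Algebra.Formal_Power_Series" "HOL-Computational_Algebra.Polynomial"
begin

(* Write q = X and z = x + 1/x.  The finite Jacobi triple product expands
     prod_{s odd, s < 2L} (1 + z q^s + q^(2s)) = prod (1 + x q^s) (1 + q^s / x)
   as sum_{|j| <= L} q^(j^2) [2L, L+j]_(q^2) V_|j|(z), where V_n(x + 1/x) = x^n + x^-n.
   After dividing by prod (1 + q^(2s)), the coefficient of z^t on the left agrees with the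
   generating function M_t of m_odd(0, t; -) up to order 2L, and on the right the
   q-binomials agree with the central one to growing order.  Comparing z^t with z^0 gives
     (1 + 2A) M_t = H_t = sum_{m >= 1} c_m(t) q^(m^2)      (t >= 1),
   where c_m(t) is the coefficient of z^t in V_m and 1 + 2A = sum_x (-1)^x q^(4 x^2);
   hence M_t = H_t sum_{i<k} (-2A)^i + (-2A)^k M_t.
   The c_m(t) are signed sums of two binomial coefficients: if 2^e divides t + 1 they are
   divisible by 2^k unless m = t or t + 2 modulo 2^(e-k+2), and then m^2 = 1 modulo
   2^(e-k+3).  For the n of the theorem, n - m^2 is then 8 or 12 modulo 16 or 28 modulo 32,
   which is not four times a sum of at most one, two or three squares; so A^i with i < 4
   has coefficient 0 there, and A^4 an even one. *)

unbundle fps_syntax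

section \<open>Truncated formal power series\<close>

lemma fps_cutoff_mult_cong:
  assumes "fps_cutoff n f = fps_cutoff n f'" "fps_cutoff n g = fps_cutoff n g'"
  shows "fps_cutoff n (f * g) = fps_cutoff n (f' * g')"
proof -
  have "(f * g) $ k = (f' * g') $ k" if "k < n" for k
  proof -
    have "(f * g) $ k = (fps_cutoff n f * fps_cutoff n g) $ k"
      using that by (simp add: fps_cutoff_left_mult_nth fps_cutoff_right_mult_nth)
    also have "\<dots> = (f' * g') $ k"
      using that by (simp add: assms fps_cutoff_left_mult_nth fps_cutoff_right_mult_nth)
    finally show ?thesis .
  qed
  then show ?thesis by (simp add: fps_cutoff_eq_fps_cutoff_iff)
qed

lemma fps_cutoff_sum: "fps_cutoff n (\<Sum>i\<in>A. f i) = (\<Sum>i\<in>A. fps_cutoff n (f i))"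
  by (simp add: fps_eq_iff fps_sum_nth)

lemma fps_cutoff_prod_cong:
  assumes "\<And>i. i \<in> A \<Longrightarrow> fps_cutoff n (f i) = fps_cutoff n (g i)"
  shows "fps_cutoff n (\<Prod>i\<in>A. f i) = fps_cutoff n (\<Prod>i\<in>A. g i)"
  using assms by (induction A rule: infinite_finite_induct) (auto intro: fps_cutoff_mult_cong)

lemma fps_cutoff_mono:
  assumes "fps_cutoff n f = fps_cutoff n g" "m \<le> n"
  shows "fps_cutoff m f = fps_cutoff m g"
  using assms by (simp add: fps_cutoff_eq_fps_cutoff_iff)

lemma fps_cutoff_X_power_mult_cong:
  assumes "fps_cutoff n f = fps_cutoff n g"
  shows "fps_cutoff (n + e) (fps_X ^ e * f) = fps_cutoff (n + e) (fps_X ^ e * g)"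
  using assms by (auto simp: fps_cutoff_eq_fps_cutoff_iff fps_X_power_mult_nth)

lemma fps_cutoff_mult_cancel:
  fixes f g h :: "'a::idom fps"
  assumes "g $ 0 \<noteq> 0" "fps_cutoff n (f * g) = fps_cutoff n (h * g)"
  shows "fps_cutoff n f = fps_cutoff n h"
proof -
  have "fps_cutoff n ((f - h) * g) = 0"
    using assms(2) by (simp add: fps_cutoff_diff left_diff_distrib)
  moreover have "g \<noteq> 0" "subdegree g = 0"
    using assms(1) by (auto simp: subdegree_eq_0_iff)
  ultimately have "fps_cutoff n (f - h) = 0"
    by (cases "f = h") (auto simp: fps_cutoff_zero_iff)
  then show ?thesis by (simp add: fps_cutoff_diff)
qed

section \<open>Gaussian binomial coefficients\<close>

text \<open>Gaussian binomial coefficients \<open>[n, k]\<close> and q-Pochhammer symbols \<open>(q;q)_n\<close> in the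
  base \<open>q = X^2\<close>.\<close>

fun qbinom :: "nat \<Rightarrow> nat \<Rightarrow> 'a::comm_ring_1 fps" where
  "qbinom n 0 = 1"
| "qbinom 0 (Suc k) = 0"
| "qbinom (Suc n) (Suc k) = qbinom n k + fps_X ^ (2 * Suc k) * qbinom n (Suc k)"

definition qpoch :: "nat \<Rightarrow> 'a::comm_ring_1 fps" where
  "qpoch n = (\<Prod>i=1..n. 1 - fps_X ^ (2 * i))"

lemma qbinom_eq_0: "n < k \<Longrightarrow> qbinom n k = 0"
proof (induction n arbitrary: k)
  case 0 then show ?case by (cases k) auto
next
  case (Suc n) then show ?case by (cases k) auto
qed

lemma qbinom_same [simp]: "qbinom n n = 1"
  by (induction n) (auto simp: qbinom_eq_0)

lemma qbinom_nth_0: "qbinom n k $ 0 = (if k \<le> n then 1 else 0)"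
proof (induction n arbitrary: k)
  case 0 then show ?case by (cases k) auto
next
  case (Suc n) then show ?case by (cases k) (auto simp: fps_X_power_mult_nth)
qed

lemma qpoch_0 [simp]: "qpoch 0 = 1"
  by (simp add: qpoch_def)

lemma qpoch_Suc: "qpoch (Suc n) = qpoch n * (1 - fps_X ^ (2 * Suc n))"
  by (simp add: qpoch_def prod.nat_ivl_Suc')

lemma qpoch_nth_0: "qpoch n $ 0 = 1"
  by (induction n) (auto simp: qpoch_Suc fps_mult_nth)

lemma qbinom_mult_qpoch: "k \<le> n \<Longrightarrow> qbinom n k * qpoch k * qpoch (n - k) = qpoch n"
proof (induction n arbitrary: k)
  case 0 then show ?case by simp
next
  case (Suc n)
  show ?case
  proof (cases k)
    case 0 then show ?thesis by simp
  next
    case (Suc j)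
    then have "j \<le> n" using Suc.prems by simp
    have left: "qbinom n j * qpoch (Suc j) * qpoch (n - j) = (qpoch n * (1 - fps_X ^ (2 * Suc j)) :: 'a fps)"
    proof -
      have "qbinom n j * qpoch (Suc j) * qpoch (n - j)
          = (qbinom n j * qpoch j * qpoch (n - j)) * (1 - fps_X ^ (2 * Suc j))"
        by (simp only: qpoch_Suc mult_ac)
      also have "qbinom n j * qpoch j * qpoch (n - j) = (qpoch n :: 'a fps)"
        using Suc.IH [OF \<open>j \<le> n\<close>] .
      finally show ?thesis .
    qed
    have right: "fps_X ^ (2 * Suc j) * (qbinom n (Suc j) * qpoch (Suc j) * qpoch (n - j))
        = (qpoch n * (fps_X ^ (2 * Suc j) - fps_X ^ (2 * Suc n)) :: 'a fps)"
    proof (cases "j = n")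
      case False
      then have "j < n" using \<open>j \<le> n\<close> by simp
      have "qbinom n (Suc j) * qpoch (Suc j) * qpoch (n - j)
          = (qbinom n (Suc j) * qpoch (Suc j) * qpoch (n - Suc j)) * (1 - fps_X ^ (2 * (n - j)))"
        using \<open>j < n\<close> by (simp add: Suc_diff_Suc [symmetric] qpoch_Suc algebra_simps)
      also have "qbinom n (Suc j) * qpoch (Suc j) * qpoch (n - Suc j) = (qpoch n :: 'a fps)"
        using Suc.IH [of "Suc j"] \<open>j < n\<close> by simp
      finally have "fps_X ^ (2 * Suc j) * (qbinom n (Suc j) * qpoch (Suc j) * qpoch (n - j))
          = fps_X ^ (2 * Suc j) * (qpoch n * (1 - fps_X ^ (2 * (n - j))) :: 'a fps)"
        by (simp only:)
      also have "\<dots> = qpoch n * (fps_X ^ (2 * Suc j) - fps_X ^ (2 * Suc j) * fps_X ^ (2 * (n - j)))"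
        by (simp add: algebra_simps)
      also have "2 * Suc j + 2 * (n - j) = 2 * Suc n" using \<open>j < n\<close> by simp
      then have "fps_X ^ (2 * Suc j) * fps_X ^ (2 * (n - j)) = (fps_X ^ (2 * Suc n) :: 'a fps)"
        by (metis power_add)
      finally show ?thesis .
    qed (simp add: qbinom_eq_0)
    have "qbinom (Suc n) k * qpoch k * qpoch (Suc n - k)
        = qbinom n j * qpoch (Suc j) * qpoch (n - j)
          + fps_X ^ (2 * Suc j) * (qbinom n (Suc j) * qpoch (Suc j) * (qpoch (n - j) :: 'a fps))"
      using Suc by (simp add: algebra_simps)
    also have "\<dots> = qpoch n * (1 - fps_X ^ (2 * Suc n))"
      unfolding left right by (simp add: algebra_simps)
    finally show ?thesis by (simp add: qpoch_Suc)
  qed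
qed

text \<open>The second q-Pascal rule, obtained from the first one by cancelling q-Pochhammer symbols.\<close>

lemma qbinom_Suc_Suc':
  assumes "k \<le> n"
  shows "(qbinom (Suc n) (Suc k) :: 'a::idom fps)
       = fps_X ^ (2 * (n - k)) * qbinom n k + qbinom n (Suc k)"
proof -
  let ?P = "qpoch (Suc k) * qpoch (n - k) :: 'a fps"
  have "?P \<noteq> 0"
    using qpoch_nth_0[of "Suc k", where 'a='a] qpoch_nth_0[of "n - k", where 'a='a] by auto
  have lhs: "qbinom (Suc n) (Suc k) * ?P = qpoch (Suc n)"
    using qbinom_mult_qpoch[of "Suc k" "Suc n"] assms by (simp add: mult.assoc)
  have first: "fps_X ^ (2 * (n - k)) * qbinom n k * ?P
      = fps_X ^ (2 * (n - k)) * qpoch n * (1 - fps_X ^ (2 * Suc k))"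
  proof -
    have "fps_X ^ (2 * (n - k)) * qbinom n k * ?P
        = fps_X ^ (2 * (n - k)) * (qbinom n k * qpoch k * qpoch (n - k)) * (1 - fps_X ^ (2 * Suc k))"
      by (simp add: qpoch_Suc algebra_simps)
    also have "qbinom n k * qpoch k * qpoch (n - k) = (qpoch n :: 'a fps)"
      by (rule qbinom_mult_qpoch[OF assms])
    finally show ?thesis .
  qed
  have second: "qbinom n (Suc k) * ?P = qpoch n * (1 - fps_X ^ (2 * (n - k)))"
  proof (cases "k = n")
    case True then show ?thesis by (simp add: qbinom_eq_0)
  next
    case False
    then have "Suc k \<le> n" using assms by simp
    then have "qbinom n (Suc k) * ?P
        = (qbinom n (Suc k) * qpoch (Suc k) * qpoch (n - Suc k)) * (1 - fps_X ^ (2 * (n - k)))"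
      by (simp add: Suc_diff_Suc[symmetric] qpoch_Suc algebra_simps)
    also have "qbinom n (Suc k) * qpoch (Suc k) * qpoch (n - Suc k) = (qpoch n :: 'a fps)"
      by (rule qbinom_mult_qpoch[OF \<open>Suc k \<le> n\<close>])
    finally show ?thesis .
  qed
  have "(fps_X ^ (2 * (n - k)) * qbinom n k + qbinom n (Suc k)) * ?P
      = qpoch n * (1 - fps_X ^ (2 * (n - k)) * fps_X ^ (2 * Suc k))"
    using first second by (simp add: algebra_simps)
  also have "fps_X ^ (2 * (n - k)) * fps_X ^ (2 * Suc k) = (fps_X ^ (2 * Suc n) :: 'a fps)"
    using assms by (simp add: power_add [symmetric])
  finally have "(fps_X ^ (2 * (n - k)) * qbinom n k + qbinom n (Suc k)) * ?P
      = qbinom (Suc n) (Suc k) * ?P"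
    using lhs by (simp add: qpoch_Suc)
  then show ?thesis using \<open>?P \<noteq> 0\<close> by simp
qed

lemma qbinom_Suc_Suc_Suc:
  assumes "k \<le> n"
  shows "(qbinom (Suc (Suc n)) (Suc k) :: 'a::idom fps)
       = (1 + fps_X ^ (2 * Suc n)) * qbinom n k
         + fps_X ^ (2 * (Suc n - k)) * (if k = 0 then 0 else qbinom n (k - 1))
         + fps_X ^ (2 * Suc k) * qbinom n (Suc k)"
proof -
  have "qbinom (Suc (Suc n)) (Suc k)
      = fps_X ^ (2 * (Suc n - k)) * qbinom (Suc n) k + (qbinom (Suc n) (Suc k) :: 'a fps)"
    using qbinom_Suc_Suc'[of k "Suc n"] assms by simp
  also have "qbinom (Suc n) (Suc k) = qbinom n k + fps_X ^ (2 * Suc k) * (qbinom n (Suc k) :: 'a fps)"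
    by simp
  also have "qbinom (Suc n) k
      = (if k = 0 then 1 else qbinom n (k - 1) + fps_X ^ (2 * k) * (qbinom n k :: 'a fps))"
    by (cases k) auto
  finally show ?thesis
    using assms by (cases k) (auto simp: algebra_simps power_add [symmetric])
qed

lemma qpoch_cutoff: "a \<le> b \<Longrightarrow> fps_cutoff (2 * (a + 1)) (qpoch b) = fps_cutoff (2 * (a + 1)) (qpoch a)"
proof (induction b rule: dec_induct)
  case (step c)
  have "qpoch (Suc c) = qpoch c - fps_X ^ (2 * Suc c) * (qpoch c :: 'a fps)"
    by (simp add: qpoch_Suc algebra_simps)
  moreover have "fps_cutoff (2 * (a + 1)) (fps_X ^ (2 * Suc c) * qpoch c) = 0"
    unfolding fps_eq_iff fps_cutoff_nth fps_X_power_mult_nth using step.hyps by auto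
  ultimately show ?case using step.IH by (simp add: fps_cutoff_diff)
qed simp

lemma qbinom_cutoff_central:
  assumes "L - m \<le> k" "k \<le> L + m" "m \<le> L"
  shows "fps_cutoff (2 * (L - m + 1)) (qbinom (2 * L) k :: 'a::idom fps)
       = fps_cutoff (2 * (L - m + 1)) (qbinom (2 * L) L)"
proof -
  let ?n = "2 * (L - m + 1)"
  have poch: "fps_cutoff ?n (qpoch j :: 'a fps) = fps_cutoff ?n (qpoch L)" if "L - m \<le> j" for j
  proof (cases "j \<le> L")
    case True
    have "fps_cutoff (2 * (j + 1)) (qpoch j :: 'a fps) = fps_cutoff (2 * (j + 1)) (qpoch L)"
      using qpoch_cutoff[OF True] by (simp add: eq_commute)
    then show ?thesis by (rule fps_cutoff_mono) (use that in simp)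
  next
    case False
    have "fps_cutoff (2 * (L + 1)) (qpoch j :: 'a fps) = fps_cutoff (2 * (L + 1)) (qpoch L)"
      using qpoch_cutoff[of L j] False by simp
    then show ?thesis by (rule fps_cutoff_mono) simp
  qed
  have "fps_cutoff ?n (qbinom (2 * L) k * (qpoch k * qpoch (2 * L - k)))
      = fps_cutoff ?n (qbinom (2 * L) k * (qpoch L * (qpoch L :: 'a fps)))"
    using assms by (intro fps_cutoff_mult_cong refl poch) auto
  also have "qbinom (2 * L) k * (qpoch k * qpoch (2 * L - k)) = qbinom (2 * L) L * (qpoch L * (qpoch L :: 'a fps))"
    using qbinom_mult_qpoch[of k "2 * L", where 'a='a] qbinom_mult_qpoch[of L "2 * L", where 'a='a] assms
    by (simp add: mult.assoc mult_2)
  finally have "fps_cutoff ?n (qbinom (2 * L) k * (qpoch L * qpoch L))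
      = fps_cutoff ?n (qbinom (2 * L) L * (qpoch L * (qpoch L :: 'a fps)))"
    by (rule sym)
  then show ?thesis
    by (rule fps_cutoff_mult_cancel[rotated]) (simp add: fps_mult_nth qpoch_nth_0)
qed

section \<open>Vieta--Lucas polynomials\<close>

text \<open>\<open>vieta_lucas n\<close> is the polynomial \<open>V_n\<close> with \<open>V_n(x + 1/x) = x^n + x^-n\<close>.\<close>

fun vieta_lucas :: "nat \<Rightarrow> 'a::comm_ring_1 poly" where
  "vieta_lucas 0 = [:2:]"
| "vieta_lucas (Suc 0) = [:0, 1:]"
| "vieta_lucas (Suc (Suc n)) = [:0, 1:] * vieta_lucas (Suc n) - vieta_lucas n"

lemma vieta_lucas_rec_abs:
  fixes j :: int
  shows "[:0, 1:] * vieta_lucas (nat \<bar>j\<bar>)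
       = (vieta_lucas (nat \<bar>j + 1\<bar>) + vieta_lucas (nat \<bar>j - 1\<bar>) :: 'a::comm_ring_1 poly)"
proof -
  have rec: "[:0, 1:] * vieta_lucas m = (vieta_lucas (m + 1) + vieta_lucas (m - 1) :: 'a poly)"
    if "1 \<le> m" for m
    using that by (cases m) auto
  consider "j \<ge> 1" | "j = 0" | "j \<le> -1" by linarith
  then show ?thesis
  proof cases
    case 1
    then have "nat \<bar>j + 1\<bar> = nat \<bar>j\<bar> + 1" "nat \<bar>j - 1\<bar> = nat \<bar>j\<bar> - 1" "1 \<le> nat \<bar>j\<bar>" by auto
    then show ?thesis using rec by simp
  next
    case 2
    then show ?thesis by (simp add: numeral_2_eq_2)
  next
    case 3
    then have "nat \<bar>j - 1\<bar> = nat \<bar>j\<bar> + 1" "nat \<bar>j + 1\<bar> = nat \<bar>j\<bar> - 1" "1 \<le> nat \<bar>j\<bar>" by auto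
    then show ?thesis using rec by (simp add: add.commute)
  qed
qed

fun lucas_coeff :: "nat \<Rightarrow> nat \<Rightarrow> int" where
  "lucas_coeff 0 t = (if t = 0 then 2 else 0)"
| "lucas_coeff (Suc 0) t = (if t = 1 then 1 else 0)"
| "lucas_coeff (Suc (Suc j)) t = (case t of 0 \<Rightarrow> 0 | Suc t' \<Rightarrow> lucas_coeff (Suc j) t') - lucas_coeff j t"

lemma coeff_vieta_lucas: "coeff (vieta_lucas j) t = of_int (lucas_coeff j t)"
proof (induction j arbitrary: t rule: vieta_lucas.induct)
  case 1 then show ?case by (cases t) auto
next
  case 2 then show ?case by (cases t) (auto simp: coeff_pCons split: nat.splits)
next
  case (3 j) then show ?case by (cases t) (auto simp: mult_pCons_left)
qed

lemma lucas_coeff_eq_0_less: "j < t \<Longrightarrow> lucas_coeff j t = 0"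
proof (induction j t rule: lucas_coeff.induct)
  case (3 j t) then show ?case by (cases t) auto
qed auto

lemma lucas_coeff_eq_0_odd: "odd (j + t) \<Longrightarrow> lucas_coeff j t = 0"
proof (induction j t rule: lucas_coeff.induct)
  case (3 j t) then show ?case by (cases t) auto
qed (auto intro: odd_pos)

lemma lucas_coeff_diag: "lucas_coeff t t = (if t = 0 then 2 else 1)"
  by (induction t rule: vieta_lucas.induct) (auto simp: lucas_coeff_eq_0_less)

lemma lucas_coeff_right_0: "lucas_coeff m 0 = (if even m then 2 * (-1) ^ (m div 2) else 0)"
  by (induction m rule: vieta_lucas.induct) auto

lemma lucas_coeff_off_diag:
  "lucas_coeff (t + 2 * (b + 1)) t
     = (-1) ^ (b + 1) * (int ((t + b + 1) choose (b + 1)) + int ((t + b) choose b))"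
proof (induction t arbitrary: b)
  case 0
  show ?case using lucas_coeff_right_0[of "2 * (b + 1)"] by simp
next
  case (Suc t)
  note outer = Suc.IH
  show ?case
  proof (induction b)
    case 0
    have "lucas_coeff (Suc t + 2 * (0 + 1)) (Suc t)
        = lucas_coeff (t + 2 * (0 + 1)) t - lucas_coeff (Suc t) (Suc t)"
      by (simp add: numeral_2_eq_2)
    then show ?case using outer[of 0] by (simp add: lucas_coeff_diag)
  next
    case (Suc b)
    have "lucas_coeff (Suc t + 2 * (Suc b + 1)) (Suc t)
        = lucas_coeff (t + 2 * (Suc b + 1)) t - lucas_coeff (Suc t + 2 * (b + 1)) (Suc t)"
    proof -
      have "Suc t + 2 * (Suc b + 1) = Suc (Suc (Suc t + 2 * (b + 1)))" by simp
      moreover have "Suc (Suc t + 2 * (b + 1)) = t + 2 * (Suc b + 1)" by simp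
      ultimately show ?thesis by simp
    qed
    moreover have "(t + b + 3) choose (b + 2) = ((t + b + 2) choose (b + 2)) + ((t + b + 2) choose (b + 1))"
      "(t + b + 2) choose (b + 1) = ((t + b + 1) choose (b + 1)) + ((t + b + 1) choose b)"
      by (simp_all add: numeral_3_eq_3 numeral_2_eq_2)
    ultimately show ?case
      using outer[of "Suc b"] Suc.IH by (simp add: algebra_simps numeral_3_eq_3 numeral_2_eq_2)
  qed
qed

section \<open>The finite Jacobi triple product\<close>

text \<open>In the variable \<open>z = x + 1/x\<close>, \<open>jtp_factor s = (1 + x X^s)(1 + X^s/x)\<close>, and
  \<open>jtp_weight L j\<close> is the coefficient of \<open>x^j\<close> in the finite Jacobi triple product \<open>jtp_prod L\<close>.\<close>

definition jtp_factor :: "nat \<Rightarrow> 'a::comm_ring_1 fps poly" where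
  "jtp_factor s = [:1 + fps_X ^ (2 * s), fps_X ^ s:]"

definition jtp_prod :: "nat \<Rightarrow> 'a::comm_ring_1 fps poly" where
  "jtp_prod L = (\<Prod>s | odd s \<and> s < 2 * L. jtp_factor s)"

lemma odd_less_double_Suc: "{s. odd s \<and> s < 2 * Suc L} = insert (2 * L + 1) {s. odd s \<and> s < 2 * L}"
  by (auto elim!: oddE)

lemma jtp_prod_Suc: "jtp_prod (Suc L) = jtp_factor (2 * L + 1) * jtp_prod L"
  unfolding jtp_prod_def odd_less_double_Suc by simp

definition jtp_weight :: "nat \<Rightarrow> int \<Rightarrow> 'a::comm_ring_1 fps" where
  "jtp_weight L j =
     (if \<bar>j\<bar> \<le> int L then fps_X ^ nat (j * j) * qbinom (2 * L) (nat (int L + j)) else 0)"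

lemma jtp_factor_mult:
  "jtp_factor s * p = smult (1 + fps_X ^ (2 * s)) p + smult (fps_X ^ s) ([:0, 1:] * p)"
  by (simp add: jtp_factor_def mult_pCons_left)

lemma jtp_weight_eq_0: "int L < \<bar>j\<bar> \<Longrightarrow> jtp_weight L j = 0"
  by (simp add: jtp_weight_def)

lemma square_exponent_step_down:
  fixes i :: int
  assumes "\<bar>i - 1\<bar> \<le> int L"
  shows "nat ((i - 1) * (i - 1)) + (2 * L + 1) = nat (i * i) + 2 * nat (int L + 1 - i)"
proof -
  have "nat ((i - 1) * (i - 1) + (2 * int L + 1)) = nat (i * i + 2 * (int L + 1 - i))"
    by (simp add: algebra_simps)
  moreover have "0 \<le> (i - 1) * (i - 1)" "0 \<le> i * i" "0 \<le> int L + 1 - i"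
    using assms by auto
  ultimately show ?thesis by (simp add: nat_add_distrib nat_mult_distrib)
qed

lemma square_exponent_step_up:
  fixes i :: int
  assumes "\<bar>i + 1\<bar> \<le> int L"
  shows "nat ((i + 1) * (i + 1)) + (2 * L + 1) = nat (i * i) + 2 * nat (int L + 1 + i)"
  using square_exponent_step_down[of "- i" L] assms by (simp add: algebra_simps)

lemma jtp_weight_pred:
  assumes "int k = int L + i" "0 < k" "k \<le> Suc (2 * L)"
  shows "fps_X ^ nat (i * i) * fps_X ^ (2 * (Suc (2 * L) - k)) * qbinom (2 * L) (k - 1)
       = fps_X ^ (2 * L + 1) * (jtp_weight L (i - 1) :: 'a::comm_ring_1 fps)"
proof -
  have h: "\<bar>i - 1\<bar> \<le> int L" "nat (int L + (i - 1)) = k - 1" "Suc (2 * L) - k = nat (int L + 1 - i)"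
    using assms by linarith+
  have "nat (i * i) + 2 * (Suc (2 * L) - k) = (2 * L + 1) + nat ((i - 1) * (i - 1))"
    unfolding h(3) using square_exponent_step_down [OF h(1)] by linarith
  then have "fps_X ^ nat (i * i) * fps_X ^ (2 * (Suc (2 * L) - k))
      = fps_X ^ (2 * L + 1) * (fps_X ^ nat ((i - 1) * (i - 1)) :: 'a fps)"
    by (metis power_add)
  then show ?thesis using h by (simp add: jtp_weight_def mult.assoc)
qed

lemma jtp_weight_succ:
  assumes "int k = int L + i" "k < 2 * L"
  shows "fps_X ^ nat (i * i) * fps_X ^ (2 * Suc k) * qbinom (2 * L) (Suc k)
       = fps_X ^ (2 * L + 1) * (jtp_weight L (i + 1) :: 'a::comm_ring_1 fps)"
proof -
  have h: "\<bar>i + 1\<bar> \<le> int L" "nat (int L + (i + 1)) = Suc k" "Suc k = nat (int L + 1 + i)"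
    using assms by linarith+
  have "nat (i * i) + 2 * Suc k = (2 * L + 1) + nat ((i + 1) * (i + 1))"
    unfolding h(3) using square_exponent_step_up [OF h(1)] by linarith
  then have "fps_X ^ nat (i * i) * fps_X ^ (2 * Suc k)
      = fps_X ^ (2 * L + 1) * (fps_X ^ nat ((i + 1) * (i + 1)) :: 'a fps)"
    by (metis power_add)
  then show ?thesis using h by (simp add: jtp_weight_def mult.assoc del: qbinom.simps)
qed

lemma jtp_weight_Suc_interior:
  assumes "\<bar>i\<bar> \<le> int L"
  shows "(jtp_weight (Suc L) i :: 'a::idom fps)
       = (1 + fps_X ^ (2 * (2 * L + 1))) * jtp_weight L i
         + fps_X ^ (2 * L + 1) * (jtp_weight L (i - 1) + jtp_weight L (i + 1))"
proof -
  define k where "k = nat (int L + i)"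
  have k: "k \<le> 2 * L" "int k = int L + i" using assms by (auto simp: k_def)
  let ?Xi = "fps_X ^ nat (i * i) :: 'a fps"
  have "jtp_weight (Suc L) i = ?Xi * qbinom (Suc (Suc (2 * L))) (Suc k)"
  proof -
    have "nat (int (Suc L) + i) = Suc k" using k by simp
    then show ?thesis using assms by (simp add: jtp_weight_def del: qbinom.simps)
  qed
  also have "\<dots> = (1 + fps_X ^ (2 * Suc (2 * L))) * (?Xi * qbinom (2 * L) k)
      + ?Xi * fps_X ^ (2 * (Suc (2 * L) - k)) * (if k = 0 then 0 else qbinom (2 * L) (k - 1))
      + ?Xi * fps_X ^ (2 * Suc k) * qbinom (2 * L) (Suc k)"
    unfolding qbinom_Suc_Suc_Suc [OF k(1)] by (simp add: algebra_simps)
  also have "?Xi * qbinom (2 * L) k = jtp_weight L i"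
    using assms by (simp add: jtp_weight_def k_def)
  also have "?Xi * fps_X ^ (2 * (Suc (2 * L) - k)) * (if k = 0 then 0 else qbinom (2 * L) (k - 1))
      = fps_X ^ (2 * L + 1) * jtp_weight L (i - 1)"
  proof (cases "k = 0")
    case False
    then show ?thesis using k jtp_weight_pred [of k L i, where 'a='a] by simp
  qed (use k in \<open>simp add: jtp_weight_def\<close>)
  also have "?Xi * fps_X ^ (2 * Suc k) * qbinom (2 * L) (Suc k) = fps_X ^ (2 * L + 1) * jtp_weight L (i + 1)"
  proof (cases "k = 2 * L")
    case False
    then show ?thesis using k jtp_weight_succ [of k L i, where 'a='a] by simp
  qed (use k in \<open>simp add: jtp_weight_def qbinom_eq_0\<close>)
  finally show ?thesis by (simp add: algebra_simps)
qed

lemma jtp_weight_Suc: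
  assumes "\<bar>i\<bar> \<le> int L + 1"
  shows "(jtp_weight (Suc L) i :: 'a::idom fps)
       = (1 + fps_X ^ (2 * (2 * L + 1))) * jtp_weight L i
         + fps_X ^ (2 * L + 1) * (jtp_weight L (i - 1) + jtp_weight L (i + 1))"
proof -
  consider "i = int L + 1" | "i = - int L - 1" | "\<bar>i\<bar> \<le> int L" using assms by linarith
  then show ?thesis
  proof cases
    case 1
    have "nat (int (Suc L) + i) = 2 * Suc L" "nat (int L + (i - 1)) = 2 * L" "nat (int L + 1 - i) = 0"
      using 1 by simp_all
    then have "jtp_weight (Suc L) i = (fps_X ^ nat (i * i) :: 'a fps)"
      "jtp_weight L (i - 1) = (fps_X ^ nat ((i - 1) * (i - 1)) :: 'a fps)"
      "jtp_weight L i = (0 :: 'a fps)" "jtp_weight L (i + 1) = (0 :: 'a fps)"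
      "nat (i * i) = (2 * L + 1) + nat ((i - 1) * (i - 1))"
      using 1 square_exponent_step_down[of i L] by (simp_all add: jtp_weight_def del: qbinom.simps)
    then show ?thesis by (simp add: power_add)
  next
    case 2
    have "nat (int L + 1 + i) = 0" using 2 by simp
    then have "jtp_weight (Suc L) i = (fps_X ^ nat (i * i) :: 'a fps)"
      "jtp_weight L (i + 1) = (fps_X ^ nat ((i + 1) * (i + 1)) :: 'a fps)"
      "jtp_weight L i = (0 :: 'a fps)" "jtp_weight L (i - 1) = (0 :: 'a fps)"
      "nat (i * i) = (2 * L + 1) + nat ((i + 1) * (i + 1))"
      using 2 square_exponent_step_up[of i L] by (simp_all add: jtp_weight_def)
    then show ?thesis by (simp add: power_add)
  next
    case 3
    then show ?thesis by (rule jtp_weight_Suc_interior)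
  qed
qed

lemma sum_shift_extend:
  fixes f :: "int \<Rightarrow> 'a::comm_monoid_add"
  assumes "\<bar>d\<bar> \<le> 1" "\<And>j. int L < \<bar>j - d\<bar> \<Longrightarrow> f j = 0"
  shows "(\<Sum>j\<in>{-int L..int L}. f (j + d)) = (\<Sum>j\<in>{-int L - 1..int L + 1}. f j)"
proof -
  have "(\<Sum>j\<in>{-int L..int L}. f (j + d)) = (\<Sum>j\<in>{-int L + d..int L + d}. f j)"
    by (rule sum.reindex_bij_witness [of _ "\<lambda>j. j - d" "\<lambda>j. j + d"]) auto
  also have "\<dots> = (\<Sum>j\<in>{-int L - 1..int L + 1}. f j)"
    using assms by (intro sum.mono_neutral_left) auto
  finally show ?thesis .
qed

lemma jtp_factor_mult_sum:
  fixes c :: "int \<Rightarrow> 'a::comm_ring_1 fps"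
  assumes "\<And>j. int L < \<bar>j\<bar> \<Longrightarrow> c j = 0"
  shows "jtp_factor s * (\<Sum>j\<in>{-int L..int L}. smult (c j) (vieta_lucas (nat \<bar>j\<bar>)))
       = (\<Sum>j\<in>{-int L - 1..int L + 1}.
            smult ((1 + fps_X ^ (2 * s)) * c j + fps_X ^ s * (c (j - 1) + c (j + 1))) (vieta_lucas (nat \<bar>j\<bar>)))"
proof -
  define R where "R = {-int L - 1..int L + 1}"
  define a where "a = (1 + fps_X ^ (2 * s) :: 'a fps)"
  define b where "b = (fps_X ^ s :: 'a fps)"
  let ?V = "\<lambda>j. vieta_lucas (nat \<bar>j\<bar>) :: 'a fps poly"
  have "jtp_factor s * (\<Sum>j\<in>{-int L..int L}. smult (c j) (?V j))
      = (\<Sum>j\<in>{-int L..int L}. smult (c j) (jtp_factor s * ?V j))"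
    by (simp add: sum_distrib_left mult_smult_right)
  also have "\<dots> = (\<Sum>j\<in>{-int L..int L}. (\<lambda>i. smult (a * c i) (?V i)) (j + 0))
      + (\<Sum>j\<in>{-int L..int L}. (\<lambda>i. smult (b * c (i - 1)) (?V i)) (j + 1))
      + (\<Sum>j\<in>{-int L..int L}. (\<lambda>i. smult (b * c (i + 1)) (?V i)) (j + (-1)))"
    unfolding jtp_factor_mult vieta_lucas_rec_abs a_def b_def
    by (simp add: sum.distrib smult_add_right algebra_simps)
  also have "\<dots> = (\<Sum>j\<in>R. smult (a * c j) (?V j)) + (\<Sum>j\<in>R. smult (b * c (j - 1)) (?V j))
      + (\<Sum>j\<in>R. smult (b * c (j + 1)) (?V j))"
    unfolding R_def by (subst (1 2 3) sum_shift_extend) (auto simp: assms)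
  also have "\<dots> = (\<Sum>j\<in>R. smult (a * c j + b * (c (j - 1) + c (j + 1))) (?V j))"
    by (simp add: sum.distrib [symmetric] smult_add_left [symmetric] algebra_simps)
  finally show ?thesis unfolding R_def a_def b_def .
qed

lemma jtp_prod_expansion:
  "2 * jtp_prod L
     = (\<Sum>j\<in>{-int L..int L}. smult (jtp_weight L j) (vieta_lucas (nat \<bar>j\<bar>)) :: 'a::idom fps poly)"
proof (induction L)
  case 0
  have "jtp_weight 0 0 = (1 :: 'a fps)" by (simp add: jtp_weight_def)
  then show ?case by (simp add: jtp_prod_def numeral_poly)
next
  case (Suc L)
  have "2 * jtp_prod (Suc L) = jtp_factor (2 * L + 1) * (2 * jtp_prod L :: 'a fps poly)"
    by (simp add: jtp_prod_Suc algebra_simps)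
  also have "\<dots> = (\<Sum>j\<in>{-int L - 1..int L + 1}. smult ((1 + fps_X ^ (2 * (2 * L + 1))) * jtp_weight L j
      + fps_X ^ (2 * L + 1) * (jtp_weight L (j - 1) + jtp_weight L (j + 1))) (vieta_lucas (nat \<bar>j\<bar>)))"
    unfolding Suc by (rule jtp_factor_mult_sum) (simp add: jtp_weight_eq_0)
  also have "\<dots> = (\<Sum>j\<in>{-int (Suc L)..int (Suc L)}. smult (jtp_weight (Suc L) j) (vieta_lucas (nat \<bar>j\<bar>)))"
    by (intro sum.cong) (auto simp: jtp_weight_Suc [where 'a='a])
  finally show ?case .
qed

section \<open>The generating function of \<open>m_odd 0 t\<close>\<close>

text \<open>\<open>qfrac s = X^s / (1 + X^(2s))\<close>, the factor in the definition of \<open>m_odd 0\<close>.\<close>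

definition qfrac :: "nat \<Rightarrow> int fps" where
  "qfrac s = Abs_fps (\<lambda>k. if s dvd k \<and> s \<le> k then cheb 0 (k div s - 1) else 0)"

lemma qfrac_nth_less: "k < s \<Longrightarrow> qfrac s $ k = 0"
  by (simp add: qfrac_def)

lemma qfrac_mult:
  assumes "0 < s"
  shows "qfrac s * (1 + fps_X ^ (2 * s)) = fps_X ^ s"
proof (rule fps_ext)
  fix k
  have "(qfrac s * (1 + fps_X ^ (2 * s))) $ k = qfrac s $ k + (if k < 2 * s then 0 else qfrac s $ (k - 2 * s))"
    by (simp add: distrib_left fps_X_power_mult_right_nth)
  also have "\<dots> = (fps_X ^ s :: int fps) $ k"
  proof (cases "s dvd k \<and> s \<le> k")
    case True
    then obtain m where m: "k = s * (m + 1)"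
      by (metis dvd_def Suc_eq_plus1 mult_0_right not0_implies_Suc le_zero_eq assms not_less_zero)
    consider "m = 0" | "m = 1" | m' where "m = Suc (Suc m')"
      by (metis One_nat_def not0_implies_Suc)
    then show ?thesis
    proof cases
      case 3
      have "k - 2 * s = s * (m' + 1)" using m 3 by (simp add: algebra_simps)
      then show ?thesis using m 3 assms by (simp add: qfrac_def algebra_simps)
    qed (use m assms in \<open>simp_all add: qfrac_def\<close>)
  next
    case False
    have "\<not> (s dvd (k - 2 * s) \<and> s \<le> k - 2 * s) \<or> k < 2 * s"
    proof (rule ccontr)
      assume "\<not> ?thesis"
      then have "s dvd (k - 2 * s)" "2 * s \<le> k" by auto
      then have "s dvd (k - 2 * s + 2 * s)" by (intro dvd_add) auto
      then show False using False \<open>2 * s \<le> k\<close> by simp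
    qed
    moreover have "k \<noteq> s" using False by auto
    ultimately show ?thesis using False by (auto simp: qfrac_def)
  qed
  finally show "(qfrac s * (1 + fps_X ^ (2 * s))) $ k = (fps_X ^ s :: int fps) $ k" .
qed

lemma fps_cutoff_qfrac:
  assumes "0 < s"
  shows "fps_cutoff (n + 1) (qfrac s)
       = fps_cutoff (n + 1) (\<Sum>m\<le>n. of_int (cheb 0 m) * fps_X ^ (s * (m + 1)))"
proof -
  have "qfrac s $ k = (\<Sum>m\<le>n. of_int (cheb 0 m) * fps_X ^ (s * (m + 1)) :: int fps) $ k"
    if "k \<le> n" for k
  proof -
    have sum: "(\<Sum>m\<le>n. of_int (cheb 0 m) * fps_X ^ (s * (m + 1)) :: int fps) $ k
        = (\<Sum>m\<le>n. if k = s * (m + 1) then cheb 0 m else 0)"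
      unfolding fps_sum_nth by (intro sum.cong) auto
    show ?thesis
    proof (cases "s dvd k \<and> s \<le> k")
      case True
      then obtain m0 where m0: "k = s * (m0 + 1)"
        by (metis dvd_def Suc_eq_plus1 mult_0_right not0_implies_Suc le_zero_eq assms not_less_zero)
      have "m0 + 1 \<le> k" using m0 assms by (cases s) auto
      then have "(\<Sum>m\<le>n. if k = s * (m + 1) then cheb 0 m else 0)
          = (\<Sum>m\<le>n. if m = m0 then cheb 0 m else 0)"
        using m0 assms by (intro sum.cong) auto
      also have "\<dots> = cheb 0 m0" using \<open>m0 + 1 \<le> k\<close> that by simp
      finally show ?thesis using sum m0 assms by (simp add: qfrac_def)
    next
      case False
      then show ?thesis using sum by (auto simp: qfrac_def intro!: sum.neutral)
    qed
  qed
  then show ?thesis by (simp add: fps_cutoff_eq_fps_cutoff_iff)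
qed

lemma prod_qfrac_nth:
  assumes "finite S" "0 \<notin> S"
  shows "(\<Prod>s\<in>S. qfrac s) $ n
       = (\<Sum>f \<in> {f \<in> S \<rightarrow>\<^sub>E {..n}. (\<Sum>s\<in>S. s * (f s + 1)) = n}. \<Prod>s\<in>S. cheb 0 (f s))"
proof -
  let ?T = "\<lambda>s. \<Sum>m\<le>n. of_int (cheb 0 m) * fps_X ^ (s * (m + 1)) :: int fps"
  have "fps_cutoff (n + 1) (\<Prod>s\<in>S. qfrac s) = fps_cutoff (n + 1) (\<Prod>s\<in>S. ?T s)"
    using assms by (intro fps_cutoff_prod_cong fps_cutoff_qfrac) (auto intro!: Nat.gr0I)
  then have "(\<Prod>s\<in>S. qfrac s) $ n = (\<Prod>s\<in>S. ?T s) $ n"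
    by (simp add: fps_cutoff_eq_fps_cutoff_iff)
  also have "(\<Prod>s\<in>S. ?T s)
      = (\<Sum>f\<in>S \<rightarrow>\<^sub>E {..n}. \<Prod>s\<in>S. of_int (cheb 0 (f s)) * fps_X ^ (s * (f s + 1)))"
    by (rule prod_sum_PiE) (use assms in auto)
  also have "\<dots> = (\<Sum>f\<in>S \<rightarrow>\<^sub>E {..n}. of_int (\<Prod>s\<in>S. cheb 0 (f s)) * fps_X ^ (\<Sum>s\<in>S. s * (f s + 1)))"
    by (simp add: prod.distrib power_sum of_int_prod [symmetric] del: of_int_prod)
  also have "\<dots> $ n = (\<Sum>f\<in>S \<rightarrow>\<^sub>E {..n}. if (\<Sum>s\<in>S. s * (f s + 1)) = n then \<Prod>s\<in>S. cheb 0 (f s) else 0)"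
    unfolding fps_sum_nth by (intro sum.cong refl) (simp add: fps_X_power_nth del: of_int_prod)
  also have "\<dots> = (\<Sum>f \<in> {f \<in> S \<rightarrow>\<^sub>E {..n}. (\<Sum>s\<in>S. s * (f s + 1)) = n}. \<Prod>s\<in>S. cheb 0 (f s))"
    by (rule sum.inter_filter [symmetric]) (use assms in \<open>auto intro: finite_PiE\<close>)
  finally show ?thesis .
qed

lemma prod_qfrac_nth_eq_0:
  assumes "finite S" "s0 \<in> S" "n < s0"
  shows "(\<Prod>s\<in>S. qfrac s) $ n = 0"
proof -
  have "(\<Prod>s\<in>S. qfrac s) = qfrac s0 * (\<Prod>s\<in>S - {s0}. qfrac s)"
    using assms by (simp add: prod.remove)
  then show ?thesis
    using assms by (simp add: fps_mult_nth qfrac_nth_less)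
qed

lemma coeff_prod_linear_factors:
  fixes f :: "'a \<Rightarrow> 'b::comm_semiring_1"
  assumes "finite A"
  shows "coeff (\<Prod>s\<in>A. [:1, f s:]) t = (\<Sum>S | S \<subseteq> A \<and> card S = t. \<Prod>s\<in>S. f s)"
proof -
  have monoms: "(\<Prod>s\<in>S. monom (f s) 1) = monom (\<Prod>s\<in>S. f s) (card S)" if "finite S" for S
    using that by (induction S rule: finite_induct) (auto simp: mult_monom)
  have "(\<Prod>s\<in>A. [:1, f s:]) = (\<Prod>s\<in>A. monom (f s) 1 + 1)"
    by (intro prod.cong refl) (simp add: monom_altdef one_pCons)
  also have "\<dots> = (\<Sum>S\<in>Pow A. (\<Prod>s\<in>S. monom (f s) 1) * (\<Prod>s\<in>A - S. 1))"
    by (rule prod_add [OF assms])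
  also have "\<dots> = (\<Sum>S\<in>Pow A. monom (\<Prod>s\<in>S. f s) (card S))"
  proof (intro sum.cong refl)
    fix S assume "S \<in> Pow A"
    then have "finite S" using assms finite_subset by blast
    then show "(\<Prod>s\<in>S. monom (f s) 1) * (\<Prod>s\<in>A - S. 1) = monom (\<Prod>s\<in>S. f s) (card S)"
      using monoms by simp
  qed
  finally have "coeff (\<Prod>s\<in>A. [:1, f s:]) t = (\<Sum>S\<in>Pow A. if card S = t then \<Prod>s\<in>S. f s else 0)"
    by (simp add: coeff_sum coeff_monom eq_commute)
  also have "\<dots> = (\<Sum>S\<in>{S \<in> Pow A. card S = t}. \<Prod>s\<in>S. f s)"
    by (rule sum.inter_filter [symmetric]) (use assms in auto)
  also have "{S \<in> Pow A. card S = t} = {S. S \<subseteq> A \<and> card S = t}" by auto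
  finally show ?thesis .
qed

definition jtp_denom :: "nat \<Rightarrow> int fps" where
  "jtp_denom L = (\<Prod>s | odd s \<and> s < 2 * L. 1 + fps_X ^ (2 * s))"

definition m_odd_poly :: "nat \<Rightarrow> int fps poly" where
  "m_odd_poly L = (\<Prod>s | odd s \<and> s < 2 * L. [:1, qfrac s:])"

lemma jtp_prod_split: "jtp_prod L = smult (jtp_denom L) (m_odd_poly L)"
proof -
  have "jtp_factor s = smult (1 + fps_X ^ (2 * s)) [:1, qfrac s:]" if "odd s" for s
    using qfrac_mult[of s] that by (simp add: jtp_factor_def mult.commute odd_pos)
  then show ?thesis
    unfolding jtp_prod_def jtp_denom_def m_odd_poly_def prod_smult [symmetric]
    by (intro prod.cong) auto
qed

lemma coeff_m_odd_poly_0: "coeff (m_odd_poly L) 0 = 1"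
  by (simp add: m_odd_poly_def poly_0_coeff_0 [symmetric] poly_prod)

lemma coeff_m_odd_poly:
  assumes "n < 2 * L"
  shows "coeff (m_odd_poly L) t $ n = m_odd 0 t n"
proof -
  let ?F = "\<lambda>S. \<Sum>f \<in> {f \<in> S \<rightarrow>\<^sub>E {..n}. (\<Sum>s\<in>S. s * (f s + 1)) = n}. \<Prod>s\<in>S. cheb 0 (f s)"
  define A where "A = {s. odd s \<and> s < 2 * L}"
  have "finite A" by (simp add: A_def)
  have "coeff (m_odd_poly L) t $ n = (\<Sum>S | S \<subseteq> A \<and> card S = t. (\<Prod>s\<in>S. qfrac s) $ n)"
    unfolding m_odd_poly_def A_def [symmetric] coeff_prod_linear_factors [OF \<open>finite A\<close>]
    by (simp add: fps_sum_nth)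
  also have "\<dots> = (\<Sum>S | S \<subseteq> {k. odd k \<and> k \<le> n} \<and> card S = t. (\<Prod>s\<in>S. qfrac s) $ n)"
  proof (rule sum.mono_neutral_right)
    show "finite {S. S \<subseteq> A \<and> card S = t}" using \<open>finite A\<close> by simp
    show "{S. S \<subseteq> {k. odd k \<and> k \<le> n} \<and> card S = t} \<subseteq> {S. S \<subseteq> A \<and> card S = t}"
      using assms by (auto simp: A_def)
    show "\<forall>S\<in>{S. S \<subseteq> A \<and> card S = t} - {S. S \<subseteq> {k. odd k \<and> k \<le> n} \<and> card S = t}.
        (\<Prod>s\<in>S. qfrac s) $ n = 0"
    proof
      fix S assume S: "S \<in> {S. S \<subseteq> A \<and> card S = t} - {S. S \<subseteq> {k. odd k \<and> k \<le> n} \<and> card S = t}"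
      then have "S \<subseteq> A" "\<not> S \<subseteq> {k. odd k \<and> k \<le> n}" by auto
      then obtain s0 where "s0 \<in> S" "\<not> (odd s0 \<and> s0 \<le> n)" by auto
      moreover from this have "n < s0" using \<open>S \<subseteq> A\<close> by (auto simp: A_def)
      moreover have "finite S" using S \<open>finite A\<close> finite_subset by blast
      ultimately show "(\<Prod>s\<in>S. qfrac s) $ n = 0" by (intro prod_qfrac_nth_eq_0)
    qed
  qed
  also have "\<dots> = (\<Sum>S | S \<subseteq> {k. odd k \<and> k \<le> n} \<and> card S = t. ?F S)"
    by (intro sum.cong refl prod_qfrac_nth) (auto intro: finite_subset)
  also have "\<dots> = m_odd 0 t n" by (simp add: m_odd_def)
  finally show ?thesis .
qed

lemma jtp_denom_coeff_m_odd_poly: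
  "2 * jtp_denom L * coeff (m_odd_poly L) t
     = (\<Sum>j\<in>{-int L..int L}. jtp_weight L j * of_int (lucas_coeff (nat \<bar>j\<bar>) t))"
proof -
  have "coeff (2 * jtp_prod L) t = 2 * jtp_denom L * coeff (m_odd_poly L) t"
    by (simp add: jtp_prod_split numeral_poly mult.assoc)
  then show ?thesis
    unfolding jtp_prod_expansion by (simp add: coeff_sum coeff_vieta_lucas)
qed

text \<open>\<open>lucas_theta t = (SUM m >= 1. lucas_coeff m t X^(m^2))\<close>, and \<open>1 + 2 theta_tail\<close> is the
  theta series \<open>(SUM x in Z. (-1)^x X^(4 x^2))\<close>.\<close>

definition m_odd_fps :: "nat \<Rightarrow> int fps" where
  "m_odd_fps t = Abs_fps (m_odd 0 t)"

definition lucas_theta :: "nat \<Rightarrow> int fps" where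
  "lucas_theta t = Abs_fps (\<lambda>n. \<Sum>m\<in>{1..n}. if m * m = n then lucas_coeff m t else 0)"

definition theta_tail :: "int fps" where
  "theta_tail = Abs_fps (\<lambda>n. \<Sum>m\<in>{1..n}. if m * m = n \<and> even m then (-1) ^ (m div 2) else 0)"

lemma lucas_theta_0: "lucas_theta 0 = 2 * theta_tail"
  by (rule fps_ext)
    (auto simp: lucas_theta_def theta_tail_def lucas_coeff_right_0 numeral_fps_const sum_distrib_left
      intro!: sum.cong)

lemma sum_int_symmetric:
  fixes f :: "int \<Rightarrow> 'a::comm_monoid_add"
  shows "(\<Sum>j\<in>{-int L..int L}. f j) = f 0 + (\<Sum>m\<in>{1..L}. f (int m) + f (- int m))"
proof (induction L)
  case (Suc L)
  have "{-int (Suc L)..int (Suc L)} = insert (int (Suc L)) (insert (- int (Suc L)) {-int L..int L})"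
    by auto
  then show ?case using Suc by (simp add: add_ac)
qed simp

lemma theta_sum_cutoff:
  assumes "K \<le> L"
  shows "fps_cutoff K (\<Sum>j\<in>{-int L..int L}. fps_X ^ nat (j * j) * of_int (lucas_coeff (nat \<bar>j\<bar>) t))
       = fps_cutoff K (of_int (lucas_coeff 0 t) + 2 * lucas_theta t)"
proof -
  have "(\<Sum>j\<in>{-int L..int L}. fps_X ^ nat (j * j) * of_int (lucas_coeff (nat \<bar>j\<bar>) t)) $ k
      = (of_int (lucas_coeff 0 t) + 2 * lucas_theta t :: int fps) $ k" if "k < L" for k
  proof -
    have "(\<Sum>j\<in>{-int L..int L}. fps_X ^ nat (j * j) * of_int (lucas_coeff (nat \<bar>j\<bar>) t)) $ k
        = (\<Sum>j\<in>{-int L..int L}. if k = nat (j * j) then lucas_coeff (nat \<bar>j\<bar>) t else 0)"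
      unfolding fps_sum_nth by (intro sum.cong refl) (simp add: fps_X_power_mult_right_nth)
    also have "\<dots> = (if k = 0 then lucas_coeff 0 t else 0)
        + 2 * (\<Sum>m\<in>{1..L}. if m * m = k then lucas_coeff m t else 0)"
      unfolding sum_int_symmetric sum_distrib_left
      by (intro arg_cong2 [where f = "(+)"] sum.cong refl) (auto simp: nat_mult_distrib)
    also have "(\<Sum>m\<in>{1..L}. if m * m = k then lucas_coeff m t else 0)
        = (\<Sum>m\<in>{1..k}. if m * m = k then lucas_coeff m t else 0)"
    proof (rule sum.mono_neutral_right)
      show "\<forall>m\<in>{1..L} - {1..k}. (if m * m = k then lucas_coeff m t else 0) = 0"
      proof
        fix m assume "m \<in> {1..L} - {1..k}"
        then have "k < m" by auto
        also have "m \<le> m * m" by (rule le_square)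
        finally show "(if m * m = k then lucas_coeff m t else 0) = 0" by simp
      qed
    qed (use that in auto)
    finally show ?thesis by (simp add: lucas_theta_def numeral_fps_const)
  qed
  then show ?thesis using assms by (simp add: fps_cutoff_eq_fps_cutoff_iff)
qed

lemma jtp_weight_sum_cutoff:
  assumes "K \<le> 2 * L + 1"
  shows "fps_cutoff K (\<Sum>j\<in>{-int L..int L}. jtp_weight L j * of_int (lucas_coeff (nat \<bar>j\<bar>) t))
       = fps_cutoff K (qbinom (2 * L) L
           * (\<Sum>j\<in>{-int L..int L}. fps_X ^ nat (j * j) * of_int (lucas_coeff (nat \<bar>j\<bar>) t)) :: int fps)"
  unfolding sum_distrib_left fps_cutoff_sum
proof (rule sum.cong [OF refl])
  fix j assume j: "j \<in> {-int L..int L}"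
  define m where "m = nat \<bar>j\<bar>"
  have m: "m \<le> L" "L - m \<le> nat (int L + j)" "nat (int L + j) \<le> L + m" "nat (j * j) = m * m"
    using j by (auto simp: m_def nat_mult_distrib [symmetric] abs_mult_self_eq)
  have w: "jtp_weight L j = fps_X ^ (m * m) * qbinom (2 * L) (nat (int L + j))"
    using j m(4) by (auto simp: jtp_weight_def)
  have "fps_cutoff (2 * (L - m + 1)) (qbinom (2 * L) (nat (int L + j)))
      = fps_cutoff (2 * (L - m + 1)) (qbinom (2 * L) L :: int fps)"
    using m by (intro qbinom_cutoff_central) auto
  then have "fps_cutoff (2 * (L - m + 1) + m * m) (jtp_weight L j)
      = fps_cutoff (2 * (L - m + 1) + m * m) (fps_X ^ (m * m) * qbinom (2 * L) L :: int fps)"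
    unfolding w by (rule fps_cutoff_X_power_mult_cong)
  moreover have "K \<le> 2 * (L - m + 1) + m * m"
  proof -
    have "2 * m \<le> m * m + 1"
      by (cases m) (simp_all add: algebra_simps)
    then show ?thesis using assms m(1) by arith
  qed
  ultimately have "fps_cutoff K (jtp_weight L j) = fps_cutoff K (fps_X ^ (m * m) * qbinom (2 * L) L :: int fps)"
    by (rule fps_cutoff_mono)
  then have "fps_cutoff K (jtp_weight L j * of_int (lucas_coeff m t))
      = fps_cutoff K (fps_X ^ (m * m) * qbinom (2 * L) L * of_int (lucas_coeff m t) :: int fps)"
    by (rule fps_cutoff_mult_cong) simp
  then show "fps_cutoff K (jtp_weight L j * of_int (lucas_coeff (nat \<bar>j\<bar>) t))
      = fps_cutoff K (qbinom (2 * L) L * (fps_X ^ nat (j * j) * of_int (lucas_coeff (nat \<bar>j\<bar>) t)) :: int fps)"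
    by (simp add: m_def [symmetric] m(4) mult_ac)
qed

theorem theta_mult_m_odd_fps:
  assumes "1 \<le> t"
  shows "(1 + 2 * theta_tail) * m_odd_fps t = lucas_theta t"
proof (rule fps_ext)
  fix n :: nat
  define L where "L = n + 1"
  define G where "G = (qbinom (2 * L) L :: int fps)"
  let ?e = "coeff (m_odd_poly L) t"
  have cutoff: "fps_cutoff L (2 * jtp_denom L * coeff (m_odd_poly L) u)
      = fps_cutoff L (G * (of_int (lucas_coeff 0 u) + 2 * lucas_theta u))" for u
  proof -
    have "fps_cutoff L (2 * jtp_denom L * coeff (m_odd_poly L) u)
        = fps_cutoff L (G * (\<Sum>j\<in>{-int L..int L}. fps_X ^ nat (j * j) * of_int (lucas_coeff (nat \<bar>j\<bar>) u)))"
      unfolding jtp_denom_coeff_m_odd_poly G_def by (rule jtp_weight_sum_cutoff) simp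
    also have "\<dots> = fps_cutoff L (G * (of_int (lucas_coeff 0 u) + 2 * lucas_theta u))"
      by (rule fps_cutoff_mult_cong [OF refl theta_sum_cutoff]) simp
    finally show ?thesis .
  qed
  have "fps_cutoff L ((1 + 2 * theta_tail) * ?e * (2 * G)) = fps_cutoff L (2 * jtp_denom L * ?e)"
  proof -
    have "fps_cutoff L (2 * jtp_denom L) = fps_cutoff L (G * (2 * (1 + 2 * theta_tail)))"
      using cutoff[of 0] by (simp add: coeff_m_odd_poly_0 lucas_theta_0 algebra_simps)
    then have "fps_cutoff L (2 * jtp_denom L * ?e) = fps_cutoff L (G * (2 * (1 + 2 * theta_tail)) * ?e)"
      by (rule fps_cutoff_mult_cong) simp
    then show ?thesis by (simp add: mult_ac)
  qed
  also have "\<dots> = fps_cutoff L (G * (of_int (lucas_coeff 0 t) + 2 * lucas_theta t))"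
    by (rule cutoff)
  also have "G * (of_int (lucas_coeff 0 t) + 2 * lucas_theta t) = lucas_theta t * (2 * G)"
    using assms by (simp add: mult_ac)
  finally have "fps_cutoff L ((1 + 2 * theta_tail) * ?e) = fps_cutoff L (lucas_theta t)"
    by (rule fps_cutoff_mult_cancel [rotated]) (simp add: G_def qbinom_nth_0 numeral_fps_const)
  moreover have "fps_cutoff L (m_odd_fps t) = fps_cutoff L ?e"
    using coeff_m_odd_poly by (simp add: fps_cutoff_eq_fps_cutoff_iff m_odd_fps_def L_def)
  then have "fps_cutoff L ((1 + 2 * theta_tail) * m_odd_fps t) = fps_cutoff L ((1 + 2 * theta_tail) * ?e)"
    by (rule fps_cutoff_mult_cong [OF refl])
  ultimately have "fps_cutoff L ((1 + 2 * theta_tail) * m_odd_fps t) = fps_cutoff L (lucas_theta t)"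
    by simp
  then show "((1 + 2 * theta_tail) * m_odd_fps t) $ n = lucas_theta t $ n"
    by (simp add: fps_cutoff_eq_fps_cutoff_iff L_def)
qed

section \<open>Two-adic divisibility\<close>

lemma prime_power_dvd_factor:
  fixes p b x :: nat
  assumes "prime p" "p ^ e dvd b * x" "\<not> p ^ (d + 1) dvd b" "d \<le> e"
  shows "p ^ (e - d) dvd x"
  using assms(2-4)
proof (induction d arbitrary: e b)
  case 0
  then have "coprime (p ^ e) b"
    using assms(1) by (simp add: prime_imp_coprime)
  then show ?case using 0 by (simp add: coprime_dvd_mult_right_iff)
next
  case (Suc d)
  show ?case
  proof (cases "p dvd b")
    case False
    then have "coprime (p ^ e) b"
      using assms(1) by (simp add: prime_imp_coprime)
    then have "p ^ e dvd x" using Suc.prems by (simp add: coprime_dvd_mult_right_iff)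
    then show ?thesis by (rule dvd_trans [rotated]) (simp add: le_imp_power_dvd)
  next
    case True
    then obtain b' where b: "b = p * b'" by blast
    obtain e' where e: "e = Suc e'" using Suc.prems by (cases e) auto
    have "p ^ e' dvd b' * x" "\<not> p ^ (d + 1) dvd b'"
      using Suc.prems assms(1) unfolding b e by (auto simp: mult.assoc prime_gt_0_nat)
    then show ?thesis using Suc.IH[of e' b'] Suc.prems e by simp
  qed
qed

lemma two_power_dvd_binomial:
  assumes "2 ^ e dvd t + 1" "k \<le> e" "\<not> 2 ^ (e - k + 1) dvd b"
  shows "2 ^ k dvd (t + b) choose b"
proof -
  obtain b' where b': "b = Suc b'" using assms(3) by (cases b) auto
  have "b * ((t + b) choose b) = (t + 1) * ((t + b) choose b')"
    using Suc_times_binomial_add[of b' t] by (simp add: b' add_ac)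
  moreover have "2 ^ e dvd (t + 1) * ((t + b) choose b')"
    using assms(1) by (rule dvd_mult2)
  ultimately have "2 ^ e dvd b * ((t + b) choose b)" by simp
  then have "2 ^ (e - (e - k)) dvd (t + b) choose b"
    using assms(2,3) by (intro prime_power_dvd_factor) auto
  then show ?thesis using assms(2) by simp
qed

lemma two_power_dvd_lucas_coeff:
  assumes "2 ^ e dvd t + 1" "k \<le> e"
    and "\<not> (2::int) ^ (e - k + 2) dvd int m - int t" "\<not> (2::int) ^ (e - k + 2) dvd int m - int t - 2"
  shows "(2::int) ^ k dvd lucas_coeff m t"
proof (cases "m < t \<or> odd (m + t)")
  case True
  then show ?thesis by (auto simp: lucas_coeff_eq_0_less lucas_coeff_eq_0_odd)
next
  case False
  then obtain b where m: "m = t + 2 * b"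
    by (metis add_diff_inverse_nat dvd_diff_nat even_add evenE le_add2 not_less)
  have double: "(2::int) ^ (e - k + 2) dvd 2 * int c" if "2 ^ (e - k + 1) dvd c" for c
  proof -
    from that obtain q where "c = 2 ^ (e - k + 1) * q" by blast
    then have "2 * int c = 2 ^ (e - k + 2) * int q" by simp
    then show ?thesis by simp
  qed
  obtain b' where b: "b = Suc b'" using m assms(3) by (cases b) auto
  have "\<not> 2 ^ (e - k + 1) dvd Suc b'" "\<not> 2 ^ (e - k + 1) dvd b'"
    using double[of "Suc b'"] double[of b'] assms(3,4) by (auto simp: m b algebra_simps)
  then have "2 ^ k dvd (t + Suc b') choose Suc b'" "2 ^ k dvd (t + b') choose b'"
    using two_power_dvd_binomial [OF assms(1,2)] by blast+
  then have "int (2 ^ k) dvd int (((t + b' + 1) choose (b' + 1)) + ((t + b') choose b'))"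
    unfolding int_dvd_int_iff by simp
  then have "(2::int) ^ k dvd int ((t + b' + 1) choose (b' + 1)) + int ((t + b') choose b')"
    by simp
  then show ?thesis
    using lucas_coeff_off_diag[of t b'] by (simp add: m b)
qed

lemma m_odd_fps_expansion:
  assumes "1 \<le> t"
  shows "m_odd_fps t = lucas_theta t * (\<Sum>i<k. (-2 * theta_tail) ^ i) + (-2 * theta_tail) ^ k * m_odd_fps t"
proof -
  have geometric: "1 - (-2 * theta_tail) ^ k = (1 + 2 * theta_tail) * (\<Sum>i<k. (-2 * theta_tail) ^ i)"
    using one_diff_power_eq[of "-2 * theta_tail" k] by simp
  have "m_odd_fps t = (1 - (-2 * theta_tail) ^ k) * m_odd_fps t + (-2 * theta_tail) ^ k * m_odd_fps t"
    by (simp add: algebra_simps)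
  also have "(1 - (-2 * theta_tail) ^ k) * m_odd_fps t
      = ((1 + 2 * theta_tail) * m_odd_fps t) * (\<Sum>i<k. (-2 * theta_tail) ^ i)"
    unfolding geometric by (simp only: mult_ac)
  also have "(1 + 2 * theta_tail) * m_odd_fps t = lucas_theta t"
    by (rule theta_mult_m_odd_fps [OF assms])
  finally show ?thesis .
qed

text \<open>In the coefficient of \<open>X^n\<close> in \<open>m_odd_fps_expansion\<close>, each square \<open>m^2 <= n\<close> contributes
  \<open>lucas_coeff m t\<close> times \<open>(SUM i<k. (-2)^i (theta_tail^i)_(n - m^2))\<close>.\<close>

lemma two_power_dvd_m_odd_criterion:
  assumes "1 \<le> t"
    and "\<And>m. 1 \<le> m \<Longrightarrow> m * m \<le> n \<Longrightarrow>
      (2::int) ^ k dvd lucas_coeff m t \<or> (\<forall>i<k. (2::int) ^ (k - i) dvd (theta_tail ^ i) $ (n - m * m))"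
  shows "(2::int) ^ k dvd m_odd 0 t n"
proof -
  define P where "P = (\<Sum>i<k. (-2 * theta_tail) ^ i)"
  have power: "(-2 * theta_tail) ^ i = fps_const ((-2) ^ i) * theta_tail ^ i" for i
  proof -
    have "-2 * theta_tail = fps_const (-2) * theta_tail" by (simp add: numeral_fps_const)
    then show ?thesis by (simp add: power_mult_distrib fps_const_power)
  qed
  have P_nth: "P $ r = (\<Sum>i<k. (-2) ^ i * (theta_tail ^ i) $ r)" for r
    by (simp only: P_def fps_sum_nth power fps_mult_left_const_nth)
  have "m_odd 0 t n = (lucas_theta t * P) $ n + ((-2 * theta_tail) ^ k * m_odd_fps t) $ n"
    using arg_cong [OF m_odd_fps_expansion [OF assms(1), of k], of "\<lambda>f. f $ n"]
    by (simp add: m_odd_fps_def P_def)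
  also have "((-2 * theta_tail) ^ k * m_odd_fps t) $ n = (-2) ^ k * (theta_tail ^ k * m_odd_fps t) $ n"
    by (simp only: power mult.assoc fps_mult_left_const_nth)
  also have "(2::int) ^ k dvd (lucas_theta t * P) $ n + \<dots>"
  proof (rule dvd_add)
    have "(2::int) ^ k dvd lucas_coeff m t * P $ (n - m * m)" if "1 \<le> m" "m * m \<le> n" for m
      using assms(2) [OF that]
    proof
      assume "\<forall>i<k. (2::int) ^ (k - i) dvd (theta_tail ^ i) $ (n - m * m)"
      have "(2::int) ^ k dvd (-2) ^ i * (theta_tail ^ i) $ (n - m * m)" if "i < k" for i
      proof -
        have "(2::int) ^ k = 2 ^ i * 2 ^ (k - i)"
          using that by (simp add: power_add [symmetric])
        moreover have "(2::int) ^ i dvd (-2) ^ i" by (rule dvd_power_same) simp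
        ultimately show ?thesis using \<open>\<forall>i<k. _\<close> that by (simp add: mult_dvd_mono)
      qed
      then have "(2::int) ^ k dvd P $ (n - m * m)"
        unfolding P_nth by (intro dvd_sum) simp
      then show ?thesis by simp
    qed simp
    then show "(2::int) ^ k dvd (lucas_theta t * P) $ n"
      unfolding fps_mult_nth lucas_theta_def
      by (auto simp: sum_distrib_right intro!: dvd_sum)
  qed (intro dvd_mult2 dvd_power_same, simp)
  finally show ?thesis .
qed

lemma dvd_square_minus_1:
  fixes m M :: int
  assumes "even M" "M dvd m + 1 \<or> M dvd m - 1"
  shows "2 * M dvd m * m - 1"
proof -
  have square: "m * m - 1 = (m + 1) * (m - 1)" by (simp add: algebra_simps)
  from assms(2) show ?thesis
  proof
    assume "M dvd m + 1"
    with assms(1) have "2 dvd m + 1" by (rule dvd_trans)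
    then have "2 dvd (m + 1) - 2" by (rule dvd_diff) simp
    then have "M * 2 dvd (m + 1) * (m - 1)"
      using \<open>M dvd m + 1\<close> by (intro mult_dvd_mono) simp_all
    then show ?thesis by (simp add: square mult.commute)
  next
    assume "M dvd m - 1"
    with assms(1) have "2 dvd m - 1" by (rule dvd_trans)
    then have "2 dvd (m - 1) + 2" by (rule dvd_add) simp
    then have "2 * M dvd (m + 1) * (m - 1)"
      using \<open>M dvd m - 1\<close> by (intro mult_dvd_mono) simp_all
    then show ?thesis by (simp add: square)
  qed
qed

lemma two_power_dvd_m_odd:
  assumes "2 ^ e dvd t + 1" "2 \<le> k" "k \<le> e"
    and "\<And>m i. m * m \<le> n \<Longrightarrow> (m * m) mod 2 ^ (e - k + 3) = 1 \<Longrightarrow> i < k \<Longrightarrow>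
      (2::int) ^ (k - i) dvd (theta_tail ^ i) $ (n - m * m)"
  shows "(2::int) ^ k dvd m_odd 0 t n"
proof (rule two_power_dvd_m_odd_criterion)
  show "1 \<le> t"
  proof (rule ccontr)
    assume "\<not> 1 \<le> t"
    then have "2 ^ e dvd (1::nat)" using assms(1) by (simp add: not_le)
    then show False using assms(2,3) by simp
  qed
  fix m assume "1 \<le> m" "m * m \<le> n"
  define D where "D = e - k + 2"
  show "(2::int) ^ k dvd lucas_coeff m t \<or> (\<forall>i<k. (2::int) ^ (k - i) dvd (theta_tail ^ i) $ (n - m * m))"
  proof (cases "(2::int) ^ k dvd lucas_coeff m t")
    case False
    then have "(2::int) ^ D dvd int m - int t \<or> (2::int) ^ D dvd int m - int t - 2"
      using two_power_dvd_lucas_coeff [OF assms(1,3)] unfolding D_def by blast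
    moreover have "(2::int) ^ D dvd int t + 1"
    proof -
      have "2 ^ D dvd (2::nat) ^ e" by (rule le_imp_power_dvd) (use assms(2,3) in \<open>simp add: D_def\<close>)
      then have "int (2 ^ D) dvd int (t + 1)" using assms(1) by (simp only: int_dvd_int_iff dvd_trans)
      then show ?thesis by (simp add: add.commute)
    qed
    moreover have "int m + 1 = (int m - int t) + (int t + 1)" "int m - 1 = (int m - int t - 2) + (int t + 1)"
      by simp_all
    ultimately have "(2::int) ^ D dvd int m + 1 \<or> (2::int) ^ D dvd int m - 1"
      by (metis dvd_add)
    then have "2 * 2 ^ D dvd int m * int m - 1"
      by (intro dvd_square_minus_1) (auto simp: D_def)
    then have "2 ^ Suc D dvd int m * int m - 1"
      by (simp only: power_Suc)
    then have "int m * int m mod 2 ^ Suc D = 1 mod 2 ^ Suc D"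
      by (simp only: mod_eq_dvd_iff)
    also have "(1::int) mod 2 ^ Suc D = 1"
      by (simp only: one_mod_2_pow_eq) simp
    finally have "int ((m * m) mod 2 ^ Suc D) = int 1"
      by (simp add: of_nat_mod)
    moreover have "e - k + 3 = Suc D" by (simp add: D_def)
    ultimately have "(m * m) mod 2 ^ (e - k + 3) = 1"
      by (simp only: of_nat_eq_iff)
    then show ?thesis using assms(4) \<open>m * m \<le> n\<close> by blast
  qed simp
qed

section \<open>Powers of the theta series\<close>

lemma theta_tail_power_nth_nonzero:
  assumes "(theta_tail ^ i) $ r \<noteq> 0"
  shows "\<exists>xs. length xs = i \<and> r = 4 * (\<Sum>x\<leftarrow>xs. x * x)"
  using assms
proof (induction i arbitrary: r)
  case 0
  then show ?case by (cases r) auto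
next
  case (Suc i)
  then have "(\<Sum>j=0..r. theta_tail $ j * (theta_tail ^ i) $ (r - j)) \<noteq> 0"
    by (simp add: fps_mult_nth)
  then obtain j where j: "j \<le> r" "theta_tail $ j \<noteq> 0" "(theta_tail ^ i) $ (r - j) \<noteq> 0"
    by (auto elim: sum.not_neutral_contains_not_neutral)
  from j(2) obtain m where "m \<in> {1..j}" "m * m = j" "even m"
    by (auto simp: theta_tail_def elim: sum.not_neutral_contains_not_neutral split: if_splits)
  then obtain x where "j = 4 * (x * x)" by (auto elim!: evenE)
  moreover obtain xs where "length xs = i" "r - j = 4 * (\<Sum>x\<leftarrow>xs. x * x)"
    using Suc.IH j(3) by blast
  ultimately show ?case using j(1) by (intro exI [of _ "x # xs"]) auto
qed

lemma square_mod_8: "(x * x) mod 8 \<in> {0, 1, 4 :: nat}"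
proof -
  have "(x * x) mod 8 = ((x mod 8) * (x mod 8)) mod 8" by (simp add: mod_mult_eq)
  moreover have "x mod 8 \<in> {0, 1, 2, 3, 4, 5, 6, 7}" by auto
  ultimately show ?thesis by auto
qed

lemma four_times_sum_squares_mod:
  fixes a b c :: nat
  shows "(4 * (a * a + b * b + c * c)) mod 32 \<noteq> 28"
    and "(4 * (a * a + b * b)) mod 16 \<noteq> 12"
    and "(4 * (a * a)) mod 16 \<noteq> 8"
proof -
  have residue: "(4 * s) mod 32 = 4 * (s mod 8)" "(4 * s) mod 16 = 4 * ((s mod 8) mod 4)" for s :: nat
    by (simp_all add: mult_mod_right mod_mod_cancel)
  have sum: "(u + v) mod 8 = (u mod 8 + v mod 8) mod 8" for u v :: nat
    by (simp add: mod_add_eq)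
  show "(4 * (a * a + b * b + c * c)) mod 32 \<noteq> 28" "(4 * (a * a + b * b)) mod 16 \<noteq> 12"
    "(4 * (a * a)) mod 16 \<noteq> 8"
    unfolding residue sum [of "a * a + b * b"] sum [of "a * a"]
    using square_mod_8 [of a] square_mod_8 [of b] square_mod_8 [of c] by auto
qed

lemma theta_tail_power_nth_eq_0:
  assumes "i \<le> 1 \<and> r mod 16 = 8 \<or> i \<le> 2 \<and> r mod 16 = 12 \<or> i \<le> 3 \<and> r mod 32 = 28"
  shows "(theta_tail ^ i) $ r = 0"
proof (rule ccontr)
  assume "(theta_tail ^ i) $ r \<noteq> 0"
  then obtain xs where xs: "length xs = i" "r = 4 * (\<Sum>x\<leftarrow>xs. x * x)"
    using theta_tail_power_nth_nonzero by blast
  have "i \<le> 3" using assms by auto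
  then consider "xs = []" | x where "xs = [x]" | x y where "xs = [x, y]" | x y z where "xs = [x, y, z]"
    using xs(1) by (cases xs; cases "tl xs"; cases "tl (tl xs)") auto
  then show False
  proof cases
    case 1 then show False using assms xs by auto
  next
    case (2 x)
    then show False
      using assms xs four_times_sum_squares_mod(1) [of x 0 0] four_times_sum_squares_mod(2) [of x 0]
        four_times_sum_squares_mod(3) [of x] by auto
  next
    case (3 x y)
    then show False
      using assms xs four_times_sum_squares_mod(1) [of x y 0] four_times_sum_squares_mod(2) [of x y] by auto
  next
    case (4 x y z)
    then show False
      using assms xs four_times_sum_squares_mod(1) [of x y z] by (auto simp: add.assoc)
  qed
qed

lemma even_sum_symmetric:
  fixes g :: "nat \<Rightarrow> int"
  assumes "\<And>j. j \<le> r \<Longrightarrow> g (r - j) = g j" "\<And>j. 2 * j = r \<Longrightarrow> even (g j)"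
  shows "even (\<Sum>j\<le>r. g j)"
proof -
  have "even (\<Sum>j\<in>{lo..hi}. g j)" if "lo + hi = r" for lo hi
    using that
  proof (induction "hi - lo" arbitrary: lo hi rule: less_induct)
    case less
    consider "hi < lo" | "hi = lo" | "lo < hi" by linarith
    then show ?case
    proof cases
      case 2 then show ?thesis using assms(2) less.prems by simp
    next
      case 3
      then obtain h where h: "hi = Suc h" "lo \<le> h" by (cases hi) auto
      have "(\<Sum>j\<in>{lo..hi}. g j) = g lo + (\<Sum>j\<in>{Suc lo..h}. g j) + g hi"
        using h by (simp add: sum.atLeast_Suc_atMost sum.cl_ivl_Suc)
      moreover have "even (\<Sum>j\<in>{Suc lo..h}. g j)"
        using less.hyps [of h "Suc lo"] h less.prems by simp
      moreover have "g hi = g lo"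
        using assms(1) [of lo] less.prems by (metis add_diff_cancel_left' le_add1)
      ultimately show ?thesis by simp
    qed simp
  qed
  from this [of 0 r] show ?thesis by (simp add: atLeast0AtMost)
qed

lemma even_square_nth:
  fixes F :: "int fps"
  assumes "even r \<Longrightarrow> even (F $ (r div 2))"
  shows "even ((F * F) $ r)"
  unfolding fps_mult_nth atLeast0AtMost
  by (rule even_sum_symmetric) (use assms in auto)

lemma even_theta_tail_power4_nth:
  assumes "r mod 8 = 4"
  shows "even ((theta_tail ^ 4) $ r)"
proof -
  have square: "theta_tail ^ 4 = theta_tail ^ 2 * theta_tail ^ 2"
    by (simp flip: power_add)
  have "(theta_tail ^ 2) $ (r div 2) = 0"
  proof (rule ccontr)
    assume "(theta_tail ^ 2) $ (r div 2) \<noteq> 0"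
    then obtain xs where "r div 2 = 4 * (\<Sum>x\<leftarrow>xs. x * x)"
      using theta_tail_power_nth_nonzero by blast
    then show False using assms by presburger
  qed
  then show ?thesis unfolding square by (intro even_square_nth) simp
qed

section \<open>The congruences\<close>

lemma mod_diff_eq_of_mod_eq_1:
  fixes n s M c :: nat
  assumes "s \<le> n" "s mod M = 1" "n mod M = Suc c"
  shows "(n - s) mod M = c"
proof -
  have "int ((n - s) mod M) = (int n - int s) mod int M"
    using assms(1) by (simp add: of_nat_mod of_nat_diff)
  also have "\<dots> = (int (n mod M) - int (s mod M)) mod int M"
    by (simp add: of_nat_mod mod_diff_eq)
  also have "\<dots> = int c"
    using assms(2,3) mod_less_divisor [of M n] by (cases "M = 0") auto
  finally show ?thesis by simp
qed

lemma dvd_Suc_of_mod_eq: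
  fixes t M :: nat
  assumes "0 < M" "Suc (t mod M) = M"
  shows "M dvd t + 1"
proof -
  have "t + 1 = M * (t div M) + Suc (t mod M)" by simp
  then show ?thesis using assms(2) by (metis dvd_triv_left dvd_add_triv_right_iff)
qed

lemma m_odd_dvd_4:
  assumes "t mod 8 = 7" "n mod 16 = 9 \<or> n mod 16 = 13"
  shows "4 dvd m_odd 0 t n"
proof -
  have "(2::int) ^ 2 dvd m_odd 0 t n"
  proof (rule two_power_dvd_m_odd [of 3])
    show "2 ^ 3 dvd t + 1" using assms(1) by (intro dvd_Suc_of_mod_eq) simp_all
    fix m i :: nat assume "m * m \<le> n" "(m * m) mod 2 ^ (3 - 2 + 3) = 1" "i < 2"
    then have "(n - m * m) mod 16 = 8 \<or> (n - m * m) mod 16 = 12"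
      using assms(2) mod_diff_eq_of_mod_eq_1 [of "m * m" n 16] by auto
    then have "(theta_tail ^ i) $ (n - m * m) = 0"
      using \<open>i < 2\<close> by (intro theta_tail_power_nth_eq_0) auto
    then show "(2::int) ^ (2 - i) dvd (theta_tail ^ i) $ (n - m * m)" by simp
  qed simp_all
  then show ?thesis by simp
qed

lemma m_odd_dvd_8:
  assumes "t mod 16 = 15" "n mod 16 = 13"
  shows "8 dvd m_odd 0 t n"
proof -
  have "(2::int) ^ 3 dvd m_odd 0 t n"
  proof (rule two_power_dvd_m_odd [of 4])
    show "2 ^ 4 dvd t + 1" using assms(1) by (intro dvd_Suc_of_mod_eq) simp_all
    fix m i :: nat assume "m * m \<le> n" "(m * m) mod 2 ^ (4 - 3 + 3) = 1" "i < 3"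
    then have "(n - m * m) mod 16 = 12"
      using assms(2) mod_diff_eq_of_mod_eq_1 [of "m * m" n 16] by auto
    then have "(theta_tail ^ i) $ (n - m * m) = 0"
      using \<open>i < 3\<close> by (intro theta_tail_power_nth_eq_0) auto
    then show "(2::int) ^ (3 - i) dvd (theta_tail ^ i) $ (n - m * m)" by simp
  qed simp_all
  then show ?thesis by simp
qed

lemma m_odd_dvd_16:
  assumes "t mod 64 = 63" "n mod 32 = 29"
  shows "16 dvd m_odd 0 t n"
proof -
  have "(2::int) ^ 4 dvd m_odd 0 t n"
  proof (rule two_power_dvd_m_odd [of 6])
    show "2 ^ 6 dvd t + 1" using assms(1) by (intro dvd_Suc_of_mod_eq) simp_all
    fix m i :: nat assume "m * m \<le> n" "(m * m) mod 2 ^ (6 - 4 + 3) = 1" "i < 4"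
    then have "(n - m * m) mod 32 = 28"
      using assms(2) mod_diff_eq_of_mod_eq_1 [of "m * m" n 32] by auto
    then have "(theta_tail ^ i) $ (n - m * m) = 0"
      using \<open>i < 4\<close> by (intro theta_tail_power_nth_eq_0) auto
    then show "(2::int) ^ (4 - i) dvd (theta_tail ^ i) $ (n - m * m)" by simp
  qed simp_all
  then show ?thesis by simp
qed

lemma m_odd_dvd_32:
  assumes "t mod 128 = 127" "n mod 32 = 29"
  shows "32 dvd m_odd 0 t n"
proof -
  have "(2::int) ^ 5 dvd m_odd 0 t n"
  proof (rule two_power_dvd_m_odd [of 7])
    show "2 ^ 7 dvd t + 1" using assms(1) by (intro dvd_Suc_of_mod_eq) simp_all
    fix m i :: nat assume "m * m \<le> n" "(m * m) mod 2 ^ (7 - 5 + 3) = 1" "i < 5"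
    then have r: "(n - m * m) mod 32 = 28"
      using assms(2) mod_diff_eq_of_mod_eq_1 [of "m * m" n 32] by auto
    show "(2::int) ^ (5 - i) dvd (theta_tail ^ i) $ (n - m * m)"
    proof (cases "i = 4")
      case True
      have "(n - m * m) mod 8 = (n - m * m) mod 32 mod 8" by (simp add: mod_mod_cancel)
      then have "(n - m * m) mod 8 = 4" using r by simp
      then have "even ((theta_tail ^ 4) $ (n - m * m))" by (rule even_theta_tail_power4_nth)
      then show ?thesis using True by simp
    next
      case False
      then have "(theta_tail ^ i) $ (n - m * m) = 0"
        using r \<open>i < 5\<close> by (intro theta_tail_power_nth_eq_0) auto
      then show ?thesis by simp
    qed
  qed simp_all
  then show ?thesis by simp
qed

theorem mainTheorem16:
  fixes J N :: nat
  shows "(4::int) dvd m_odd 0 (8*J+7) (16*N+9)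
       \<and> (4::int) dvd m_odd 0 (8*J+7) (16*N+13)
       \<and> (8::int) dvd m_odd 0 (16*J+15) (16*N+13)
       \<and> (16::int) dvd m_odd 0 (64*J+63) (32*N+29)
       \<and> (32::int) dvd m_odd 0 (128*J+127) (32*N+29)"
  by (intro conjI m_odd_dvd_4 m_odd_dvd_8 m_odd_dvd_16 m_odd_dvd_32) simp_all

end
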